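(* For $\alpha\ge1$ and $y>0$ let $G_\alpha(y)=\sum_{k\in\mathbb{Z}}e^{-\pi\alpha k^2/y}\cos\big(2\pi k(\tfrac12-\tfrac1{8y^2})\big)$. Then $$\max_{y\ge\frac{\sqrt3}2+\frac1{4\sqrt\alpha}}G_\alpha(y)=G_\alpha\Big(\tfrac{\sqrt3}2+\tfrac1{4\sqrt\alpha}\Big)\le G_\alpha\Big(\tfrac{\sqrt3}2\Big)-\tfrac{2\sqrt\alpha}{3}e^{-\frac{2\pi\alpha}{\sqrt3}}.$$ *)

theory Defs
  imports "HOL-Analysis.Analysis"
begin

definition G :: "real \<Rightarrow> real \<Rightarrow> real" where
  "G \<alpha> y = (\<Sum>\<^sub>\<infinity>k::int. exp (- pi * \<alpha> * (of_int k)\<^sup>2 / y) *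
                 cos (2 * pi * of_int k * (1/2 - 1 / (8 * y\<^sup>2))))"

end

theory Submission
  imports Defs
begin

text \<open>Pairing k with -k and using cos (pi k - x) = (-1)^k cos x, one gets
  G alpha y = 1 + 2 sum_{n >= 1} (-1)^n exp(-c n^2) cos(n t) with c = pi alpha / y and
  t = pi / (4 y^2).  For c not too small the sum is governed by its first term
  -exp(-c) cos t, the rest being at most exp(-4c) / (1 - exp(-5c)).  Let
  y0 = sqrt 3 / 2 + 1 / (4 sqrt alpha).  On [y0, 3/2] the growth of exp(-c) in y beats the
  variation of all further terms, so G decreases there.  For y >= 3/2 and c >= 1/4 the first
  term alone keeps G(y) below G(y0); for c <= 1/4 the sum is within O(t^2/c^2) of the
  alternating Gaussian sum, which is at most 1 - exp(-c n0^2) for an odd n0 beyond the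
  inflection point of the Gaussian, by convexity.  The second inequality compares the first
  terms at y0 and at sqrt 3 / 2, where cos t = 1/2, using
  exp(-pi alpha / y0) >= exp(-2 pi alpha / sqrt 3) (1 + 4 sqrt alpha / 5).\<close>

section \<open>The lattice sum as an alternating theta series\<close>

lemma has_sum_UNIV_int_even:
  fixes f :: "int \<Rightarrow> real"
  assumes even: "\<And>k. f (-k) = f k"
    and summable: "summable (\<lambda>n. \<bar>f (int (Suc n))\<bar>)"
  shows "(f has_sum (f 0 + 2 * (\<Sum>n. f (int (Suc n))))) UNIV"
proof -
  define S where "S = (\<Sum>n. f (int (Suc n)))"
  have "summable (\<lambda>n. f (int (Suc n)))" by (rule summable_rabs_cancel[OF summable])
  then have half: "((\<lambda>n. f (int (Suc n))) has_sum S) UNIV"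
    unfolding S_def
    by (intro norm_summable_imp_has_sum[OF _ summable_sums]) (simp_all only: real_norm_def summable)
  have bij_pos: "bij_betw (\<lambda>n. int (Suc n)) UNIV {k. k > 0}"
    by (rule bij_betw_byWitness[where f'="\<lambda>k. nat k - 1"]) auto
  have pos: "(f has_sum S) {k. k > 0}"
    by (subst has_sum_reindex_bij_betw[OF bij_pos, symmetric]) (rule half)
  have bij_neg: "bij_betw (\<lambda>n. - int (Suc n)) UNIV {k. k < 0}"
    by (rule bij_betw_byWitness[where f'="\<lambda>k. nat (-k) - 1"]) auto
  have neg: "(f has_sum S) {k. k < 0}"
    by (subst has_sum_reindex_bij_betw[OF bij_neg, symmetric]) (unfold even, rule half)
  have "(f has_sum (S + S)) ({k. k > 0} \<union> {k. k < 0})"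
    by (rule has_sum_Un_disjoint[OF pos neg]) auto
  then have "(f has_sum (f 0 + (S + S))) (insert 0 ({k. k > 0} \<union> {k. k < 0}))"
    by (intro has_sum_insert) auto
  moreover have "insert 0 ({k::int. k > 0} \<union> {k. k < 0}) = UNIV" by auto
  moreover have "f 0 + (S + S) = f 0 + 2 * S" by simp
  ultimately show ?thesis unfolding S_def by metis
qed

definition gauss :: "real \<Rightarrow> nat \<Rightarrow> real" where
  "gauss c n = exp (- c * (real n)\<^sup>2)"

definition theta_term :: "real \<Rightarrow> real \<Rightarrow> nat \<Rightarrow> real" where
  "theta_term c t n = (-1)^n * gauss c n * cos (real n * t)"

definition theta_sum :: "real \<Rightarrow> real \<Rightarrow> real" where
  "theta_sum c t = (\<Sum>n. theta_term c t (Suc n))"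

definition theta_tail_bound :: "real \<Rightarrow> real" where
  "theta_tail_bound c = exp (-c) ^ 4 / (1 - exp (-c) ^ 5)"

lemma gauss_pos: "gauss c n > 0"
  by (simp add: gauss_def)

lemma gauss_0 [simp]: "gauss c 0 = 1"
  by (simp add: gauss_def)

lemma gauss_le_power:
  assumes "c \<ge> 0"
  shows "gauss c n \<le> exp (-c) ^ n"
proof -
  have "real n \<le> (real n)\<^sup>2" by (cases n) (auto simp: power2_eq_square)
  then have "c * real n \<le> c * (real n)\<^sup>2" using mult_left_mono assms by blast
  then have "- c * (real n)\<^sup>2 \<le> real n * (-c)" by (simp add: mult.commute)
  then show ?thesis by (simp add: gauss_def exp_of_nat_mult[symmetric])
qed

lemma gauss_Suc_le: "c \<ge> 0 \<Longrightarrow> gauss c (Suc n) \<le> gauss c n"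
  unfolding gauss_def by (simp add: mult_left_mono power_mono)

lemma norm_gauss_le_power:
  assumes "c \<ge> 0"
  shows "norm (gauss c n) \<le> exp (-c) ^ n"
  using gauss_le_power[OF assms, of n] gauss_pos[of c n] by simp

lemma gauss_tendsto_zero:
  assumes "c > 0"
  shows "gauss c \<longlonglongrightarrow> 0"
proof (rule Lim_null_comparison[OF always_eventually LIMSEQ_power_zero])
  show "\<forall>n. norm (gauss c n) \<le> exp (-c) ^ n"
    using norm_gauss_le_power assms by simp
qed (use assms in simp)

lemma summable_gauss:
  assumes "c > 0"
  shows "summable (gauss c)"
proof (rule summable_comparison_test[OF _ summable_geometric[of "exp (-c)"]])
  show "\<exists>N. \<forall>n\<ge>N. norm (gauss c n) \<le> exp (-c) ^ n"
    using norm_gauss_le_power assms by simp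
qed (use assms in simp)

lemma abs_theta_term_le: "\<bar>theta_term c t n\<bar> \<le> gauss c n"
  by (simp add: theta_term_def gauss_def abs_mult)

lemma summable_abs_theta_term_shift:
  assumes "c > 0"
  shows "summable (\<lambda>n. \<bar>theta_term c t (n + k)\<bar>)"
proof (rule summable_comparison_test'[where N=0])
  show "summable (\<lambda>n. gauss c (n + k))"
    by (rule summable_ignore_initial_segment[OF summable_gauss[OF assms]])
  show "norm \<bar>theta_term c t (n + k)\<bar> \<le> gauss c (n + k)" for n
    by (simp add: abs_theta_term_le)
qed

lemma summable_theta_term_shift:
  assumes "c > 0"
  shows "summable (\<lambda>n. theta_term c t (n + k))"
  by (rule summable_rabs_cancel[OF summable_abs_theta_term_shift[OF assms]])

lemma cos_2pi_mult_half_minus: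
  "cos (2 * pi * real n * (1/2 - 1 / (8 * y\<^sup>2))) = (-1)^n * cos (real n * (pi / (4 * y\<^sup>2)))"
proof -
  have "2 * pi * real n * (1/2 - 1 / (8 * y\<^sup>2)) = real n * pi - real n * (pi / (4 * y\<^sup>2))"
    by (simp add: field_simps)
  then show ?thesis by (simp add: cos_diff sin_npi cos_npi)
qed

lemma G_eq_theta_sum:
  assumes "\<alpha> > 0" "y > 0"
  shows "G \<alpha> y = 1 + 2 * theta_sum (pi * \<alpha> / y) (pi / (4 * y\<^sup>2))"
proof -
  define c where "c = pi * \<alpha> / y"
  define t where "t = pi / (4 * y\<^sup>2)"
  define f where "f = (\<lambda>k::int. exp (- pi * \<alpha> * (of_int k)\<^sup>2 / y) *
                 cos (2 * pi * of_int k * (1/2 - 1 / (8 * y\<^sup>2))))"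
  have f_nat: "f (int n) = theta_term c t n" for n
  proof -
    have "- pi * \<alpha> * (of_int (int n))\<^sup>2 / y = - c * (real n)\<^sup>2"
      by (simp add: c_def)
    then show ?thesis
      unfolding f_def theta_term_def gauss_def t_def by (simp add: cos_2pi_mult_half_minus)
  qed
  have "c > 0" using assms by (simp add: c_def)
  then have "summable (\<lambda>n. \<bar>f (int (Suc n))\<bar>)"
    unfolding f_nat using summable_abs_theta_term_shift[of c t 1] by simp
  moreover have "f (-k) = f k" for k
    unfolding f_def by simp
  ultimately have "(f has_sum (f 0 + 2 * (\<Sum>n. f (int (Suc n))))) UNIV"
    by (intro has_sum_UNIV_int_even)
  then have "G \<alpha> y = f 0 + 2 * (\<Sum>n. f (int (Suc n)))"
    unfolding G_def f_def by (rule infsumI)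
  moreover have "f 0 = 1" by (simp add: f_def)
  ultimately show ?thesis
    unfolding f_nat theta_sum_def c_def t_def by simp
qed

lemma theta_term_1: "theta_term c t 1 = - exp (-c) * cos t"
  by (simp add: theta_term_def gauss_def)

lemma theta_sum_split:
  assumes "c > 0"
  shows "theta_sum c t = theta_term c t 1 + (\<Sum>n. theta_term c t (n + 2))"
  using suminf_split_head[OF summable_theta_term_shift[OF assms, of t 1]]
  by (simp add: theta_sum_def)

lemma gauss_shift2_le:
  assumes "c \<ge> 0"
  shows "gauss c (n + 2) \<le> exp (-c) ^ 4 * (exp (-c) ^ 5) ^ n"
proof -
  have "real n \<le> (real n)\<^sup>2" by (cases n) (auto simp: power2_eq_square)
  then have "4 + 5 * real n \<le> (real (n + 2))\<^sup>2" by (simp add: power2_eq_square algebra_simps)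
  then have "c * (4 + 5 * real n) \<le> c * (real (n + 2))\<^sup>2" using mult_left_mono assms by blast
  then have "gauss c (n + 2) \<le> exp (real (4 + 5 * n) * (-c))"
    by (simp add: gauss_def algebra_simps)
  also have "\<dots> = exp (-c) ^ (4 + 5 * n)" by (rule exp_of_nat_mult)
  also have "\<dots> = exp (-c) ^ 4 * (exp (-c) ^ 5) ^ n" by (simp add: power_add power_mult)
  finally show ?thesis .
qed

lemma abs_theta_tail_le:
  assumes "c > 0"
  shows "\<bar>\<Sum>n. theta_term c t (n + 2)\<bar> \<le> theta_tail_bound c"
proof -
  define x where "x = exp (-c)"
  have x: "0 < x" "x ^ 5 < 1" using assms by (auto simp: x_def power_less_one_iff)
  have geom: "(\<lambda>n. x ^ 4 * (x ^ 5) ^ n) sums (x ^ 4 * (1 / (1 - x ^ 5)))"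
    by (rule sums_mult[OF geometric_sums]) (use x in auto)
  have "\<bar>\<Sum>n. theta_term c t (n + 2)\<bar> \<le> (\<Sum>n. \<bar>theta_term c t (n + 2)\<bar>)"
    by (rule summable_rabs[OF summable_abs_theta_term_shift[OF assms]])
  also have "\<dots> \<le> (\<Sum>n. x ^ 4 * (x ^ 5) ^ n)"
  proof (rule suminf_le)
    show "\<bar>theta_term c t (n + 2)\<bar> \<le> x ^ 4 * (x ^ 5) ^ n" for n
      using abs_theta_term_le[of c t "n+2"] gauss_shift2_le[of c n] assms unfolding x_def by linarith
    show "summable (\<lambda>n. \<bar>theta_term c t (n + 2)\<bar>)"
      by (rule summable_abs_theta_term_shift[OF assms])
    show "summable (\<lambda>n. x ^ 4 * (x ^ 5) ^ n)" by (rule sums_summable[OF geom])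
  qed
  also have "\<dots> = theta_tail_bound c"
    using sums_unique[OF geom] unfolding theta_tail_bound_def x_def by simp
  finally show ?thesis .
qed

lemma theta_sum_le:
  "c > 0 \<Longrightarrow> theta_sum c t \<le> - exp (-c) * cos t + theta_tail_bound c"
  using theta_sum_split[of c t] abs_theta_tail_le[of c t] theta_term_1[of c t] by linarith

lemma theta_sum_ge:
  "c > 0 \<Longrightarrow> theta_sum c t \<ge> - exp (-c) * cos t - theta_tail_bound c"
  using theta_sum_split[of c t] abs_theta_tail_le[of c t] theta_term_1[of c t] by linarith

lemma pi_bounds: "157/50 \<le> pi" "pi \<le> 3142/1000"
  using pi_approx by simp_all

lemma sqrt3_bounds: "1732/1000 \<le> sqrt 3" "sqrt 3 \<le> 17321/10000"
proof -
  show "1732/1000 \<le> sqrt 3" by (rule real_le_rsqrt) (simp add: power2_eq_square)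
  show "sqrt 3 \<le> 17321/10000" by (rule real_le_lsqrt) (simp_all add: power2_eq_square)
qed

lemma exp_mult_ge_power:
  fixes x :: real
  assumes "0 \<le> x"
  shows "(1 + x + x\<^sup>2 / 2) ^ n \<le> exp (real n * x)"
  unfolding exp_of_nat_mult
  by (rule power_mono[OF exp_lower_Taylor_quadratic[OF assms]]) (use assms in simp)

lemma exp_279_ge: "exp (279/100 :: real) \<ge> 14"
  using exp_mult_ge_power[of "279/400" 4] by (simp add: numeral_eq_Suc power2_eq_square)

lemma exp_474_ge: "exp (474/100 :: real) \<ge> 72"
  using exp_mult_ge_power[of "474/800" 8] by (simp add: numeral_eq_Suc power2_eq_square)

lemma exp_75_ge: "exp (75/10 :: real) \<ge> 138"
  using exp_mult_ge_power[of "75/20" 2] by (simp add: numeral_eq_Suc power2_eq_square)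

lemma exp_neg_174_ge: "exp (-(174/100)::real) \<ge> 158/1000"
proof -
  have "exp (-(174/100)::real) = exp (-0.10875) ^ 16"
    using exp_of_nat_mult[of 16 "-0.10875::real"] by simp
  moreover have "(0.89125::real) ^ 16 \<le> exp (-0.10875) ^ 16"
    by (rule power_mono) (use exp_ge_add_one_self[of "-0.10875::real"] in auto)
  moreover have "(158/1000::real) \<le> 0.89125 ^ 16" by (simp add: numeral_eq_Suc)
  ultimately show ?thesis by linarith
qed

lemma exp_neg_two_thirds_le:
  assumes "a \<ge> pi"
  shows "exp (- (2 * a / 3)) \<le> 3/20"
proof -
  have "(2594/1000::real) \<le> 1 + pi/3 + (pi/3)\<^sup>2 / 2"
  proof -
    have "(157/50/3)\<^sup>2 \<le> (pi/3)\<^sup>2" using pi_bounds by (intro power_mono) auto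
    then show ?thesis using pi_bounds by (simp add: power2_eq_square)
  qed
  also have "\<dots> \<le> exp (pi/3)" by (rule exp_lower_Taylor_quadratic) simp
  finally have "(2594/1000::real)\<^sup>2 \<le> (exp (pi/3))\<^sup>2" by (intro power_mono) auto
  also have "(exp (pi/3))\<^sup>2 = exp (2 * pi / 3)" by (simp add: power2_eq_square exp_add[symmetric])
  also have "\<dots> \<le> exp (2 * a / 3)" using assms by simp
  finally show ?thesis by (simp add: exp_minus field_simps power2_eq_square)
qed

section \<open>Small c: comparison with the alternating Gaussian sum\<close>

lemma sums_pairs:
  fixes f :: "nat \<Rightarrow> real"
  assumes "f sums s"
  shows "(\<lambda>j. f (2 * j) + f (2 * j + 1)) sums s"
proof -
  have "{j * 2..<j * 2 + 2} = {2 * j, 2 * j + 1::nat}" for j by auto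
  then show ?thesis using sums_group[OF assms, of 2] by simp
qed

lemma alternating_suminf_le:
  fixes h :: "nat \<Rightarrow> real"
  assumes dec: "decseq h" and lim: "h \<longlonglongrightarrow> 0" and "odd n0"
    and convex: "\<And>m. n0 \<le> m \<Longrightarrow> h (m + 1) - h (m + 2) \<le> h m - h (m + 1)"
  shows "(\<Sum>n. (-1)^n * h n) \<le> h 0 - h n0 / 2"
proof -
  define d where "d n = h n - h (Suc n)" for n
  define A where "A = (\<Sum>n. (-1)^n * h n)"
  obtain J where n0: "n0 = 2 * J + 1" using \<open>odd n0\<close> oddE by blast
  have d_nonneg: "d n \<ge> 0" for n using dec by (simp add: d_def decseq_Suc_iff)
  have d_sums: "(\<lambda>m. d (m + k)) sums h k" for k
    using telescope_sums'[OF LIMSEQ_ignore_initial_segment[OF lim, of k]] by (simp add: d_def)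
  have "(\<lambda>n. (-1)^n * h n) sums A"
    unfolding A_def by (rule summable_sums[OF summable_Leibniz(1)[OF lim decseq_imp_monoseq[OF dec]]])
  from sums_pairs[OF this] have even_sums: "(\<lambda>j. d (2 * j)) sums A"
    by (simp add: d_def)
  have "(\<lambda>j. d (2 * j + 1)) sums (h 0 - A)"
    using sums_diff[OF sums_pairs[OF d_sums[of 0]] even_sums] by simp
  then have "(\<lambda>j. d (2 * j + n0)) sums (h 0 - A - (\<Sum>j<J. d (2 * j + 1)))"
    using sums_split_initial_segment[of _ _ J] by (fastforce simp: n0 algebra_simps)
  moreover have "(\<Sum>j<J. d (2 * j + 1)) \<ge> 0" by (simp add: sum_nonneg d_nonneg)
  ultimately obtain T where odd_sums: "(\<lambda>j. d (2 * j + n0)) sums T" and "T \<le> h 0 - A"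
    by fastforce
  have "(\<lambda>j. d (2 * j + n0 + 1)) sums (h n0 - T)"
    using sums_diff[OF sums_pairs[OF d_sums[of n0]] odd_sums] by (simp add: algebra_simps)
  moreover have "d (2 * j + n0 + 1) \<le> d (2 * j + n0)" for j
    using convex[of "2 * j + n0"] by (simp add: d_def algebra_simps)
  ultimately have "h n0 - T \<le> T" by (intro sums_le[OF _ _ odd_sums])
  with \<open>T \<le> h 0 - A\<close> show ?thesis unfolding A_def by linarith
qed
lemma exp_minus_exp_neg_ge:
  assumes "v \<ge> (0::real)"
  shows "exp v - exp (-v) \<ge> 2 * v"
proof -
  define p where "p = 1 + v + v\<^sup>2 / 2"
  have p_pos: "p > 0" unfolding p_def using assms by (simp add: add_pos_nonneg)
  have p_le: "p \<le> exp v" unfolding p_def by (rule exp_lower_Taylor_quadratic[OF assms])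
  have "exp (-v) = 1 / exp v" by (simp add: exp_minus field_simps)
  also have "\<dots> \<le> 1 / p" using p_pos p_le by (simp add: frac_le)
  finally have "exp (-v) \<le> 1 / p" .
  moreover have "p * p - 1 - 2 * v * p = (v\<^sup>2 / 2)\<^sup>2"
    unfolding p_def by (simp add: power2_eq_square algebra_simps)
  then have "p * p - 1 \<ge> 2 * v * p" by (smt (verit) zero_le_power2)
  then have "p - 1 / p \<ge> 2 * v" using p_pos by (simp add: field_simps)
  ultimately show ?thesis using p_le by linarith
qed

lemma exp_plus_exp_neg_ge:
  assumes "u \<ge> (0::real)"
  shows "exp u + exp (-u) \<ge> 2 + u\<^sup>2"
proof -
  have "exp u + exp (-u) - 2 = (exp (u/2) - exp (-(u/2)))\<^sup>2"
    by (simp add: power2_eq_square algebra_simps exp_add[symmetric] exp_minus_inverse)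
  moreover have "u \<le> exp (u/2) - exp (-(u/2))"
    using exp_minus_exp_neg_ge[of "u/2"] assms by simp
  then have "u\<^sup>2 \<le> (exp (u/2) - exp (-(u/2)))\<^sup>2" using assms by (simp add: power_mono)
  ultimately show ?thesis by linarith
qed

lemma exp_le_one_plus_four_thirds:
  assumes "0 \<le> c" "c \<le> (1/4::real)"
  shows "exp c \<le> 1 + 4 * c / 3"
proof -
  have "1 - c \<le> exp (-c)" using exp_ge_add_one_self[of "-c"] by simp
  then have "(1 - c) * exp c \<le> 1" using assms by (simp add: exp_minus field_simps)
  moreover have "c * (c * 4) \<le> c * 1" by (rule mult_left_mono) (use assms in auto)
  then have "(1 - c) * (1 + 4 * c / 3) \<ge> 1" by (simp add: algebra_simps)
  ultimately have "(1 - c) * exp c \<le> (1 - c) * (1 + 4 * c / 3)" by linarith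
  then show ?thesis by (rule mult_left_le_imp_le) (use assms in auto)
qed

text \<open>Beyond its inflection point the Gaussian is convex; the condition
  \<open>(m + 1)\<^sup>2 c \<ge> 2/3\<close> is a discrete version of this, valid for \<open>c \<le> 1/4\<close>.\<close>

lemma gauss_second_diff_le:
  assumes c: "0 < c" "c \<le> 1/4" and m: "(real m + 1)\<^sup>2 * c \<ge> 2/3"
  shows "gauss c (m + 1) - gauss c (m + 2) \<le> gauss c m - gauss c (m + 1)"
proof -
  define H where "H = gauss c (m + 1)"
  define u where "u = 2 * c * (real m + 1)"
  have u_nonneg: "u \<ge> 0" unfolding u_def using c by simp
  have left: "gauss c m = H * exp (-c) * exp u"
    unfolding H_def u_def gauss_def by (simp add: exp_add[symmetric] power2_eq_square algebra_simps)
  have right: "gauss c (m + 2) = H * exp (-c) * exp (-u)"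
    unfolding H_def u_def gauss_def by (simp add: exp_add[symmetric] power2_eq_square algebra_simps)
  have "u\<^sup>2 = 4 * c * ((real m + 1)\<^sup>2 * c)" unfolding u_def by (simp add: power2_eq_square algebra_simps)
  also have "\<dots> \<ge> 4 * c * (2/3)" using m c by (intro mult_left_mono) auto
  finally have "u\<^sup>2 \<ge> 8 * c / 3" by simp
  then have "2 * exp c \<le> exp u + exp (-u)"
    using exp_le_one_plus_four_thirds[of c] exp_plus_exp_neg_ge[OF u_nonneg] c by linarith
  then have "2 * exp c * exp (-c) \<le> (exp u + exp (-u)) * exp (-c)" by (simp add: mult_right_mono)
  moreover have "exp c * exp (-c) = 1" by (simp add: exp_minus)
  ultimately have "2 \<le> exp (-c) * exp u + exp (-c) * exp (-u)" by (simp add: algebra_simps)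
  then have "H * 2 \<le> H * (exp (-c) * exp u + exp (-c) * exp (-u))"
    by (rule mult_left_mono) (simp add: H_def less_imp_le[OF gauss_pos])
  then show ?thesis unfolding left right H_def[symmetric] by (simp add: algebra_simps)
qed

lemma one_minus_cos_le: "1 - cos (x::real) \<le> x\<^sup>2 / 2"
proof -
  have "cos x = 1 - 2 * (sin (x/2))\<^sup>2" using cos_double_sin[of "x/2"] by simp
  moreover have "(sin (x/2))\<^sup>2 \<le> (x/2)\<^sup>2"
    using abs_sin_x_le_abs_x[of "x/2"] by (metis abs_ge_zero power2_abs power_mono)
  ultimately show ?thesis by (simp add: power2_eq_square)
qed

lemma odd_index_past_inflection:
  assumes c: "0 < c" "c \<le> 1/4"
  obtains n0 :: nat where "odd n0" "\<And>m. m \<ge> n0 \<Longrightarrow> (real m + 1)\<^sup>2 * c \<ge> 2/3"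
    and "c * (real n0)\<^sup>2 \<le> 174/100"
proof -
  define s where "s = sqrt (2 / (3 * c))"
  have s_nonneg: "s \<ge> 0" unfolding s_def using c by simp
  have s_sq: "s\<^sup>2 = 2 / (3 * c)" unfolding s_def using c by simp
  define J where "J = nat \<lfloor>s / 2\<rfloor>"
  have "\<lfloor>s / 2\<rfloor> \<ge> 0" using s_nonneg by simp
  then have J: "real J \<le> s / 2" "real J > s / 2 - 1"
    unfolding J_def using of_int_floor_le[of "s/2"] by linarith+
  have "(real m + 1)\<^sup>2 * c \<ge> 2/3" if "m \<ge> 2 * J + 1" for m
  proof -
    have "real m + 1 \<ge> s" using that J by linarith
    then have "(real m + 1)\<^sup>2 \<ge> s\<^sup>2" using s_nonneg by (simp add: power_mono)
    then have "(real m + 1)\<^sup>2 * c \<ge> s\<^sup>2 * c" using c by (simp add: mult_right_mono)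
    then show ?thesis unfolding s_sq using c by simp
  qed
  moreover have "c * (real (2 * J + 1))\<^sup>2 \<le> 174/100"
  proof -
    have "(c * s)\<^sup>2 = 2 * c / 3"
      using s_sq c by (simp add: power_mult_distrib power2_eq_square field_simps)
    also have "\<dots> \<le> (0.40825)\<^sup>2" using c by (simp add: power2_eq_square)
    finally have cs: "c * s \<le> 0.40825" using c s_nonneg by (simp add: power2_le_iff_abs_le)
    have "(real (2 * J + 1))\<^sup>2 \<le> (s + 1)\<^sup>2" using J by (simp add: power_mono)
    then have "c * (real (2 * J + 1))\<^sup>2 \<le> c * (s + 1)\<^sup>2" using c by (simp add: mult_left_mono)
    also have "c * (s + 1)\<^sup>2 = s\<^sup>2 * c + 2 * (c * s) + c" by (simp add: power2_eq_square algebra_simps)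
    also have "\<dots> \<le> 174/100" using s_sq c cs by simp
    finally show ?thesis .
  qed
  ultimately show ?thesis using that[of "2 * J + 1"] by simp
qed

lemma sq_mult_gauss_le:
  assumes c: "c > 0"
  shows "(real (Suc n))\<^sup>2 * gauss c (Suc n) \<le> (2 / c) * exp (-c/2) ^ n"
proof -
  define K where "K = (real (Suc n))\<^sup>2"
  define z where "z = c * K / 2"
  have "K \<ge> real n" unfolding K_def
    using mult_nonneg_nonneg[of "real n" "real n"] by (simp add: power2_eq_square algebra_simps)
  then have "c * real n / 2 \<le> z" unfolding z_def using c by (simp add: mult_left_mono divide_right_mono)
  then have exp_z: "exp (-z) \<le> exp (-c/2) ^ n" by (simp add: exp_of_nat_mult[symmetric] mult.commute)
  have z_nonneg: "z \<ge> 0" unfolding z_def K_def using c by simp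
  have "z \<le> exp z" using exp_ge_add_one_self[of z] by linarith
  then have z_exp: "z * exp (-z) \<le> 1" by (simp add: exp_minus field_simps)
  have "K * gauss c (Suc n) = (2 / c) * (z * exp (-z)) * exp (-z)"
    unfolding gauss_def z_def K_def using c by (simp add: exp_add[symmetric] field_simps)
  also have "\<dots> \<le> (2 / c) * 1 * exp (-c/2) ^ n"
    using z_exp exp_z z_nonneg c by (intro mult_mono) auto
  finally show ?thesis unfolding K_def by simp
qed

lemma inverse_one_minus_exp_half_le:
  fixes c :: real
  assumes c: "c > 0"
  shows "1 / (1 - exp (-c/2)) \<le> 2 / c + 1"
proof -
  have "1 + c/2 \<le> exp (c/2)" by (rule exp_ge_add_one_self)
  then have "1 - exp (-c/2) \<ge> (c/2) / (1 + c/2)" using c by (simp add: exp_minus field_simps)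
  moreover have pos: "(c/2) / (1 + c/2) > 0" using c by simp
  moreover have "0 < (1 - exp (-c/2)) * ((c/2) / (1 + c/2))"
    by (rule mult_pos_pos) (use c pos in simp_all)
  ultimately have "1 / (1 - exp (-c/2)) \<le> 1 / ((c/2) / (1 + c/2))"
    by (intro divide_left_mono) auto
  also have "\<dots> = 2 / c + 1" using c by (simp add: field_simps)
  finally show ?thesis .
qed

lemma abs_theta_sum_minus_alternating_le:
  assumes c: "c > 0"
  shows "\<bar>theta_sum c t - (\<Sum>n. (-1)^(Suc n) * gauss c (Suc n))\<bar> \<le> t\<^sup>2 * (2 / c\<^sup>2 + 1 / c)"
proof -
  define r where "r = exp (-c/2)"
  have r: "0 < r" "r < 1" using c unfolding r_def by auto
  define q where "q n = t\<^sup>2 / 2 * ((2 / c) * r ^ n)" for n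
  have q_sums: "q sums (t\<^sup>2 / 2 * ((2 / c) * (1 / (1 - r))))"
    unfolding q_def by (intro sums_mult geometric_sums) (use r in auto)
  define e where "e n = (-1)^(Suc n) * gauss c (Suc n) * (cos (real (Suc n) * t) - 1)" for n
  have e_le: "\<bar>e n\<bar> \<le> q n" for n
  proof -
    have "\<bar>e n\<bar> = gauss c (Suc n) * (1 - cos (real (Suc n) * t))"
      unfolding e_def using gauss_pos[of c "Suc n"] by (simp add: abs_mult)
    also have "\<dots> \<le> gauss c (Suc n) * ((real (Suc n) * t)\<^sup>2 / 2)"
      by (rule mult_left_mono[OF one_minus_cos_le]) (simp add: less_imp_le[OF gauss_pos])
    also have "\<dots> = t\<^sup>2 / 2 * ((real (Suc n))\<^sup>2 * gauss c (Suc n))" by (simp add: power_mult_distrib)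
    also have "\<dots> \<le> q n"
      unfolding q_def r_def by (rule mult_left_mono[OF sq_mult_gauss_le[OF c]]) simp
    finally show ?thesis .
  qed
  have summable_abs_e: "summable (\<lambda>n. \<bar>e n\<bar>)"
    by (rule summable_comparison_test'[OF sums_summable[OF q_sums]]) (use e_le in simp)
  have "summable (\<lambda>n. (-1)^(Suc n) * gauss c (Suc n))"
    by (rule summable_comparison_test'[OF summable_ignore_initial_segment[OF summable_gauss[OF c], of 1]])
      (simp add: abs_mult abs_of_pos gauss_pos)
  then have "theta_sum c t - (\<Sum>n. (-1)^(Suc n) * gauss c (Suc n))
      = (\<Sum>n. theta_term c t (Suc n) - (-1)^(Suc n) * gauss c (Suc n))"
    unfolding theta_sum_def using suminf_diff[OF summable_theta_term_shift[OF c, of t 1]] by simp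
  also have "(\<lambda>n. theta_term c t (Suc n) - (-1)^(Suc n) * gauss c (Suc n)) = e"
    unfolding e_def theta_term_def by (rule ext) (simp add: algebra_simps)
  also have "\<bar>suminf e\<bar> \<le> suminf q"
    using summable_rabs[OF summable_abs_e] suminf_le[OF e_le summable_abs_e sums_summable[OF q_sums]]
    by linarith
  also have "suminf q = t\<^sup>2 / 2 * ((2 / c) * (1 / (1 - r)))" using sums_unique[OF q_sums] by simp
  also have "\<dots> \<le> t\<^sup>2 / 2 * ((2 / c) * (2 / c + 1))"
    using inverse_one_minus_exp_half_le[OF c, folded r_def] c by (intro mult_left_mono) auto
  also have "\<dots> = t\<^sup>2 * (2 / c\<^sup>2 + 1 / c)" using c by (simp add: power2_eq_square field_simps)
  finally show ?thesis .
qed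

lemma theta_sum_small_c_le:
  assumes c: "0 < c" "c \<le> 1/4" and t: "\<bar>t\<bar> \<le> c\<^sup>2 / 12"
  shows "1 + 2 * theta_sum c t \<le> 17/20"
proof -
  obtain n0 :: nat where "odd n0" and n0: "\<And>m. m \<ge> n0 \<Longrightarrow> (real m + 1)\<^sup>2 * c \<ge> 2/3"
    and gauss_n0: "c * (real n0)\<^sup>2 \<le> 174/100"
    using odd_index_past_inflection[OF c] by blast
  have "(\<Sum>n. (-1)^n * gauss c n) \<le> 1 - gauss c n0 / 2"
    using alternating_suminf_le[OF _ gauss_tendsto_zero[OF c(1)] \<open>odd n0\<close>]
      gauss_second_diff_le[OF c n0] gauss_Suc_le[of c] c
    by (simp add: decseq_Suc_iff)
  moreover have alternating_summable: "summable (\<lambda>n. (-1)^n * gauss c n)"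
    by (rule summable_comparison_test'[OF summable_gauss[OF c(1)]])
      (simp add: abs_mult abs_of_pos gauss_pos)
  then have "(\<Sum>n. (-1)^(Suc n) * gauss c (Suc n)) = (\<Sum>n. (-1)^n * gauss c n) - 1"
    using suminf_split_head[OF alternating_summable] by simp
  moreover have "gauss c n0 \<ge> exp (-(174/100))" unfolding gauss_def using gauss_n0 by simp
  then have "gauss c n0 \<ge> 158/1000" using exp_neg_174_ge by linarith
  moreover have "t\<^sup>2 * (2 / c\<^sup>2 + 1 / c) \<le> 1/1000"
  proof -
    have "t\<^sup>2 \<le> (c\<^sup>2 / 12)\<^sup>2" using t by (metis abs_ge_zero power2_abs power_mono)
    then have "t\<^sup>2 * (2 / c\<^sup>2 + 1 / c) \<le> (c\<^sup>2 / 12)\<^sup>2 * (2 / c\<^sup>2 + 1 / c)"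
      using c by (intro mult_right_mono) auto
    also have "\<dots> = (2 * c\<^sup>2 + c ^ 3) / 144"
      using c by (simp add: power2_eq_square power3_eq_cube field_simps)
    also have "\<dots> \<le> (2 * (1/4)\<^sup>2 + (1/4) ^ 3) / 144"
      using c by (intro divide_right_mono add_mono mult_left_mono power_mono) auto
    finally show ?thesis by (simp add: power2_eq_square power3_eq_cube)
  qed
  ultimately show ?thesis
    using abs_theta_sum_minus_alternating_le[OF c(1), of t] by linarith
qed

section \<open>Monotonicity on the interval from the threshold to 3/2\<close>

lemma abs_cos_diff_le: "\<bar>cos u - cos v\<bar> \<le> \<bar>u - (v::real)\<bar>"
proof -
  have "\<bar>cos u - cos v\<bar> = 2 * \<bar>sin ((u + v) / 2)\<bar> * \<bar>sin ((v - u) / 2)\<bar>"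
    by (simp add: cos_diff_cos abs_mult)
  also have "\<dots> \<le> 2 * 1 * \<bar>(v - u) / 2\<bar>"
    by (intro mult_mono abs_sin_x_le_abs_x) auto
  finally show ?thesis by simp
qed

lemma abs_mult_diff_le:
  fixes e e0 g g0 :: real
  assumes "0 \<le> e0" "e0 \<le> e" "\<bar>g\<bar> \<le> 1"
  shows "\<bar>e * g - e0 * g0\<bar> \<le> (e - e0) + e0 * \<bar>g - g0\<bar>"
proof -
  have "\<bar>e * g - e0 * g0\<bar> \<le> \<bar>(e - e0) * g\<bar> + \<bar>e0 * (g - g0)\<bar>"
    by (rule order_trans[OF _ abs_triangle_ineq]) (simp add: algebra_simps)
  moreover have "\<bar>(e - e0) * g\<bar> \<le> e - e0"
    using assms by (simp add: abs_mult mult_left_le)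
  ultimately show ?thesis using assms by (simp add: abs_mult)
qed

lemma exp_neg_div_diff_le:
  fixes A y0 y :: real
  assumes "A \<ge> 0" "0 < y0" "y0 \<le> y"
  shows "exp (- A / y) - exp (- A / y0) \<le> exp (- A / y) * (A * (y - y0) / y0\<^sup>2)"
    and "exp (- A / y0) \<le> exp (- A / y)"
proof -
  have y: "y > 0" using assms by linarith
  have "1 / y0 - 1 / y = (y - y0) / (y * y0)" using assms y by (simp add: field_simps)
  also have "\<dots> \<le> (y - y0) / y0\<^sup>2"
    using assms by (intro divide_left_mono) (auto simp: power2_eq_square intro: mult_right_mono)
  finally have "1 / y0 - 1 / y \<le> (y - y0) / y0\<^sup>2" .
  then have "A * (1 / y0 - 1 / y) \<le> A * ((y - y0) / y0\<^sup>2)" using assms(1) by (rule mult_left_mono)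
  moreover have "exp (- A / y0) = exp (- A / y) * exp (- (A * (1 / y0 - 1 / y)))"
    by (simp add: exp_add[symmetric] algebra_simps)
  moreover have "exp (- (A * (1 / y0 - 1 / y))) \<ge> 1 - A * (1 / y0 - 1 / y)"
    using exp_ge_add_one_self[of "- (A * (1 / y0 - 1 / y))"] by simp
  ultimately have "exp (- A / y0) \<ge> exp (- A / y) * (1 - A * ((y - y0) / y0\<^sup>2))"
    by (smt (verit) exp_gt_zero mult_left_mono)
  then show "exp (- A / y) - exp (- A / y0) \<le> exp (- A / y) * (A * (y - y0) / y0\<^sup>2)"
    by (simp add: algebra_simps)
  have "A / y \<le> A / y0" by (rule divide_left_mono) (use assms y in auto)
  then show "exp (- A / y0) \<le> exp (- A / y)" by simp
qed

lemma angle_diff_bounds: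
  fixes y0 y :: real
  assumes "0 < y0" "y0 \<le> y"
  shows "0 \<le> pi / (4 * y0\<^sup>2) - pi / (4 * y\<^sup>2)"
    and "pi / (4 * y0\<^sup>2) - pi / (4 * y\<^sup>2) \<le> pi / 2 * (y - y0) / y0 ^ 3"
proof -
  have y: "y > 0" using assms by linarith
  have split: "pi / (4 * y0\<^sup>2) - pi / (4 * y\<^sup>2) = pi / 4 * ((1 / y0 - 1 / y) * (1 / y0 + 1 / y))"
    using assms y by (simp add: field_simps power2_eq_square)
  have diff_nonneg: "0 \<le> 1 / y0 - 1 / y" using assms y by (simp add: frac_le)
  have sum_nonneg: "0 \<le> 1 / y0 + 1 / y" using assms y by simp
  show "0 \<le> pi / (4 * y0\<^sup>2) - pi / (4 * y\<^sup>2)" unfolding split using diff_nonneg sum_nonneg by simp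
  have "1 / y0 - 1 / y = (y - y0) / (y * y0)" using assms y by (simp add: field_simps)
  also have "\<dots> \<le> (y - y0) / y0\<^sup>2"
    using assms y by (intro divide_left_mono) (auto simp: power2_eq_square intro: mult_right_mono)
  finally have diff_le: "1 / y0 - 1 / y \<le> (y - y0) / y0\<^sup>2" .
  have "1 / y \<le> 1 / y0" by (rule divide_left_mono) (use assms y in auto)
  then have sum_le: "1 / y0 + 1 / y \<le> 2 / y0" by simp
  have "(1 / y0 - 1 / y) * (1 / y0 + 1 / y) \<le> ((y - y0) / y0\<^sup>2) * (2 / y0)"
    by (rule mult_mono[OF diff_le sum_le]) (use assms sum_nonneg in auto)
  also have "\<dots> = 2 * (y - y0) / y0 ^ 3"
    using assms by (simp add: power2_eq_square power3_eq_cube field_simps)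
  finally have "pi / 4 * ((1 / y0 - 1 / y) * (1 / y0 + 1 / y)) \<le> pi / 4 * (2 * (y - y0) / y0 ^ 3)"
    by (rule mult_left_mono) simp
  also have "\<dots> = pi / 2 * (y - y0) / y0 ^ 3" using assms by (simp add: field_simps)
  finally show "pi / (4 * y0\<^sup>2) - pi / (4 * y\<^sup>2) \<le> pi / 2 * (y - y0) / y0 ^ 3"
    unfolding split .
qed

lemma abs_cos_angle_diff_le:
  assumes "0 < y0" "y0 \<le> y"
  shows "\<bar>cos (real m * (pi / (4 * y\<^sup>2))) - cos (real m * (pi / (4 * y0\<^sup>2)))\<bar>
         \<le> real m * (pi / 2 * (y - y0) / y0 ^ 3)"
proof -
  have "\<bar>cos (real m * (pi / (4 * y\<^sup>2))) - cos (real m * (pi / (4 * y0\<^sup>2)))\<bar>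
      \<le> \<bar>real m * (pi / (4 * y0\<^sup>2) - pi / (4 * y\<^sup>2))\<bar>"
    using abs_cos_diff_le by (simp add: right_diff_distrib abs_minus_commute)
  also have "\<dots> = real m * (pi / (4 * y0\<^sup>2) - pi / (4 * y\<^sup>2))"
    using angle_diff_bounds(1)[OF assms] by simp
  also have "\<dots> \<le> real m * (pi / 2 * (y - y0) / y0 ^ 3)"
    by (rule mult_left_mono[OF angle_diff_bounds(2)[OF assms]]) simp
  finally show ?thesis .
qed

lemma abs_theta_term_diff_le:
  fixes a y0 y :: real
  assumes a: "a \<ge> 0" and y: "0 < y0" "y0 \<le> y" "y \<le> 3/2"
  shows "\<bar>theta_term (a / y) (pi / (4 * y\<^sup>2)) m - theta_term (a / y0) (pi / (4 * y0\<^sup>2)) m\<bar>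
         \<le> (y - y0) * (gauss (2 * a / 3) m * ((real m)\<^sup>2 * (a / y0\<^sup>2 + pi / (2 * y0 ^ 3))))"
proof -
  have y_pos: "y > 0" using y by linarith
  define A where "A = a * (real m)\<^sup>2"
  have A: "A \<ge> 0" unfolding A_def using a by simp
  define E where "E = gauss (2 * a / 3) m"
  define g where "g = cos (real m * (pi / (4 * y\<^sup>2)))"
  define g0 where "g0 = cos (real m * (pi / (4 * y0\<^sup>2)))"
  have "theta_term (a / y) (pi / (4 * y\<^sup>2)) m - theta_term (a / y0) (pi / (4 * y0\<^sup>2)) m
      = (-1)^m * (exp (- A / y) * g - exp (- A / y0) * g0)"
    unfolding theta_term_def gauss_def A_def g_def g0_def by (simp add: algebra_simps)
  then have "\<bar>theta_term (a / y) (pi / (4 * y\<^sup>2)) m - theta_term (a / y0) (pi / (4 * y0\<^sup>2)) m\<bar>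
      = \<bar>exp (- A / y) * g - exp (- A / y0) * g0\<bar>"
    by (simp add: abs_mult)
  also have "\<dots> \<le> (exp (- A / y) - exp (- A / y0)) + exp (- A / y0) * \<bar>g - g0\<bar>"
    using exp_neg_div_diff_le(2)[OF A y(1,2)] by (intro abs_mult_diff_le) (auto simp: g_def)
  also have "\<dots> \<le> E * (A * (y - y0) / y0\<^sup>2) + E * (real m * (pi / 2 * (y - y0) / y0 ^ 3))"
  proof -
    have "exp (- A / y) \<le> E"
    proof -
      have "A * (2/3) \<le> A / y" using A y y_pos by (simp add: field_simps mult_left_mono)
      then show ?thesis unfolding E_def gauss_def A_def by (simp add: algebra_simps)
    qed
    moreover have "exp (- A / y0) \<le> exp (- A / y)" by (rule exp_neg_div_diff_le(2)[OF A y(1,2)])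
    moreover have "\<bar>g - g0\<bar> \<le> real m * (pi / 2 * (y - y0) / y0 ^ 3)"
      unfolding g_def g0_def by (rule abs_cos_angle_diff_le[OF y(1,2)])
    moreover have "0 \<le> A * (y - y0) / y0\<^sup>2" using A y by simp
    ultimately show ?thesis
      using exp_neg_div_diff_le(1)[OF A y(1,2)]
      by (smt (verit) abs_ge_zero exp_ge_zero mult_mono mult_right_mono)
  qed
  also have "\<dots> \<le> (y - y0) * (E * ((real m)\<^sup>2 * (a / y0\<^sup>2 + pi / (2 * y0 ^ 3))))"
  proof -
    have "real m \<le> (real m)\<^sup>2" by (cases m) (auto simp: power2_eq_square)
    then have "real m * (pi / (2 * y0 ^ 3)) \<le> (real m)\<^sup>2 * (pi / (2 * y0 ^ 3))"
      using y by (intro mult_right_mono) auto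
    moreover have "E * (A * (y - y0) / y0\<^sup>2) + E * (real m * (pi / 2 * (y - y0) / y0 ^ 3))
        = (y - y0) * E * ((real m)\<^sup>2 * (a / y0\<^sup>2) + real m * (pi / (2 * y0 ^ 3)))"
      unfolding A_def by (simp add: field_simps)
    moreover have "0 \<le> (y - y0) * E" using y by (simp add: E_def less_imp_le[OF gauss_pos])
    ultimately show ?thesis by (smt (verit) distrib_left mult.assoc mult_left_mono)
  qed
  finally show ?thesis unfolding E_def .
qed

lemma two_power_ge: "real n + 2 \<le> 2 ^ (n + 1)"
  by (induction n) simp_all

lemma gauss_sq_shift2_le:
  assumes "b \<ge> 0"
  shows "gauss b (n + 2) * (real (n + 2))\<^sup>2 \<le> 4 * exp (-b) ^ 4 * (4 * exp (-b)) ^ n"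
proof -
  have "(real (n + 2))\<^sup>2 \<le> (2 ^ (n + 1))\<^sup>2"
    using two_power_ge[of n] by (intro power_mono) auto
  also have "((2::real) ^ (n + 1))\<^sup>2 = 4 * 4 ^ n"
    by (simp add: power2_eq_square power_mult_distrib[symmetric])
  finally have sq: "(real (n + 2))\<^sup>2 \<le> 4 * 4 ^ n" .
  have "real (n + 4) \<le> (real (n + 2))\<^sup>2"
    using mult_nonneg_nonneg[of "real n" "real n"] by (simp add: power2_eq_square algebra_simps)
  then have "- b * (real (n + 2))\<^sup>2 \<le> real (n + 4) * (- b)"
    using assms by (simp add: mult_left_mono mult.commute)
  then have "gauss b (n + 2) \<le> exp (-b) ^ (n + 4)"
    unfolding gauss_def by (simp add: exp_of_nat_mult[symmetric] del: of_nat_add)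
  then have "gauss b (n + 2) * (real (n + 2))\<^sup>2 \<le> exp (-b) ^ (n + 4) * (4 * 4 ^ n)"
    by (rule mult_mono[OF _ sq]) auto
  also have "\<dots> = 4 * exp (-b) ^ 4 * (4 * exp (-b)) ^ n" by (simp add: power_add power_mult_distrib)
  finally show ?thesis .
qed

lemma theta_tail_diff_le:
  fixes a y0 y :: real
  defines "r \<equiv> exp (- (2 * a / 3))"
  assumes a: "a > 0" "4 * r < 1" and y: "0 < y0" "y0 \<le> y" "y \<le> 3/2"
  shows "(\<Sum>n. theta_term (a / y) (pi / (4 * y\<^sup>2)) (n + 2))
           - (\<Sum>n. theta_term (a / y0) (pi / (4 * y0\<^sup>2)) (n + 2))
         \<le> (y - y0) * (a / y0\<^sup>2 + pi / (2 * y0 ^ 3)) * (4 * r ^ 4 / (1 - 4 * r))"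
proof -
  define K where "K = a / y0\<^sup>2 + pi / (2 * y0 ^ 3)"
  define D where "D n = theta_term (a / y) (pi / (4 * y\<^sup>2)) (n + 2)
                      - theta_term (a / y0) (pi / (4 * y0\<^sup>2)) (n + 2)" for n
  define q where "q n = (y - y0) * K * (4 * r ^ 4 * (4 * r) ^ n)" for n
  have "K \<ge> 0" unfolding K_def using a y by simp
  have D_le: "\<bar>D n\<bar> \<le> q n" for n
  proof -
    have "\<bar>D n\<bar> \<le> (y - y0) * K * (gauss (2 * a / 3) (n + 2) * (real (n + 2))\<^sup>2)"
      using abs_theta_term_diff_le[OF less_imp_le[OF a(1)] y, of "n + 2"]
      unfolding D_def K_def by (simp add: algebra_simps)
    also have "\<dots> \<le> q n"
      unfolding q_def r_def using \<open>K \<ge> 0\<close> y a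
      by (intro mult_left_mono gauss_sq_shift2_le) auto
    finally show ?thesis .
  qed
  have q_sums: "q sums ((y - y0) * K * (4 * r ^ 4 * (1 / (1 - 4 * r))))"
    unfolding q_def by (intro sums_mult geometric_sums) (use a in \<open>auto simp: r_def\<close>)
  have summable_abs_D: "summable (\<lambda>n. \<bar>D n\<bar>)"
    by (rule summable_comparison_test'[OF sums_summable[OF q_sums]]) (use D_le in simp)
  have "(\<Sum>n. theta_term (a / y) (pi / (4 * y\<^sup>2)) (n + 2))
      - (\<Sum>n. theta_term (a / y0) (pi / (4 * y0\<^sup>2)) (n + 2)) = suminf D"
    unfolding D_def using a y
    by (intro suminf_diff summable_theta_term_shift) auto
  also have "\<dots> \<le> suminf q"
    using summable_rabs[OF summable_abs_D] suminf_le[OF D_le summable_abs_D sums_summable[OF q_sums]]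
    by linarith
  finally show ?thesis using sums_unique[OF q_sums] unfolding K_def by simp
qed

lemma exp_neg_div_increase_ge:
  fixes a y0 y :: real
  assumes "a \<ge> 0" "0 < y0" "y0 \<le> y"
  shows "exp (- a / y) - exp (- a / y0) \<ge> exp (- a / y0) * (a * (y - y0) / (y * y0))"
proof -
  define x where "x = a * (1 / y0 - 1 / y)"
  have "x = a * (y - y0) / (y * y0)" unfolding x_def using assms by (simp add: field_simps)
  moreover have "exp (- a / y) = exp (- a / y0) * exp x"
    unfolding x_def by (simp add: exp_add[symmetric] algebra_simps)
  moreover have "exp (- a / y0) * (1 + x) \<le> exp (- a / y0) * exp x"
    by (rule mult_left_mono[OF exp_ge_add_one_self]) simp
  ultimately show ?thesis by (simp add: algebra_simps)
qed

lemma theta_term_1_diff_le: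
  fixes a y0 y :: real
  assumes "a \<ge> 0" "1/2 \<le> y0" "y0 \<le> y" and cos_ge: "cos (pi / (4 * y0\<^sup>2)) \<ge> 1/2"
  shows "theta_term (a / y) (pi / (4 * y\<^sup>2)) 1 - theta_term (a / y0) (pi / (4 * y0\<^sup>2)) 1
         \<le> - (exp (- a / y) - exp (- a / y0)) / 2"
proof -
  define e where "e = exp (- a / y)"
  define e0 where "e0 = exp (- a / y0)"
  have "e0 \<le> e" unfolding e_def e0_def using exp_neg_div_diff_le(2)[of a y0 y] assms by simp
  have "(1/2)\<^sup>2 \<le> y0\<^sup>2" using assms by (intro power_mono) auto
  then have "pi / (4 * y0\<^sup>2) \<le> pi" by (simp add: divide_le_eq power2_eq_square)
  moreover have "pi / (4 * y\<^sup>2) \<le> pi / (4 * y0\<^sup>2)" using angle_diff_bounds(1)[of y0 y] assms by simp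
  ultimately have "cos (pi / (4 * y0\<^sup>2)) \<le> cos (pi / (4 * y\<^sup>2))"
    by (intro cos_mono_le_eq[THEN iffD2]) auto
  then have "- e * cos (pi / (4 * y\<^sup>2)) + e0 * cos (pi / (4 * y0\<^sup>2))
      \<le> - (e - e0) * cos (pi / (4 * y0\<^sup>2))"
    by (simp add: algebra_simps mult_left_mono e_def)
  also have "\<dots> \<le> - (e - e0) * (1/2)"
    using cos_ge \<open>e0 \<le> e\<close> by (intro mult_left_mono_neg) auto
  finally show ?thesis unfolding theta_term_1 e_def e0_def by simp
qed

lemma theta_tail_coeff_le:
  fixes a y0 :: real
  defines "r \<equiv> exp (- (2 * a / 3))"
  assumes a: "a \<ge> pi" and y0: "433/500 \<le> y0" "y0 \<le> 9/8"
  shows "(a / y0\<^sup>2 + pi / (2 * y0 ^ 3)) * (4 * r ^ 4 / (1 - 4 * r)) \<le> exp (- a / y0) * a * (8/27)"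
proof -
  have a_pos: "a > 0" using a pi_gt_zero by linarith
  have r: "0 < r" "r \<le> 3/20" unfolding r_def using exp_neg_two_thirds_le[OF a] by auto
  have K_le: "a / y0\<^sup>2 + pi / (2 * y0 ^ 3) \<le> 53/25 * a"
  proof -
    have "(433/500)\<^sup>2 \<le> y0\<^sup>2" using y0 by (intro power_mono) auto
    then have "7499/10000 \<le> y0\<^sup>2" by (simp add: power2_eq_square)
    then have "a / y0\<^sup>2 \<le> a / (7499/10000)" using a_pos by (intro divide_left_mono) auto
    moreover have "(433/500) ^ 3 \<le> y0 ^ 3" using y0 by (intro power_mono) auto
    then have "3247/5000 \<le> y0 ^ 3" by (simp add: power3_eq_cube)
    then have "pi / (2 * y0 ^ 3) \<le> a / (2 * 3247/5000)" using a a_pos by (intro frac_le) auto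
    ultimately show ?thesis using a_pos by simp
  qed
  have "4 * r ^ 4 / (1 - 4 * r) \<le> 10 * r ^ 4" using r by (simp add: field_simps)
  then have "(a / y0\<^sup>2 + pi / (2 * y0 ^ 3)) * (4 * r ^ 4 / (1 - 4 * r)) \<le> (53/25 * a) * (10 * r ^ 4)"
    using K_le r a_pos y0 by (intro mult_mono) auto
  also have "\<dots> \<le> exp (- a / y0) * a * (8/27)"
  proof -
    have "1 / y0 \<le> 1 / (433/500)" using y0 by (intro divide_left_mono) auto
    then have "a * (8/3 - 1 / y0) \<ge> pi * (1964/1299)" using a a_pos by (intro mult_mono) auto
    moreover have "pi * (1964/1299) \<ge> 474/100" using pi_bounds by simp
    ultimately have "exp (a * (8/3 - 1 / y0)) \<ge> 72" using exp_474_ge by (smt (verit) exp_le_cancel_iff)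
    moreover have "r ^ 4 * exp (a * (8/3 - 1 / y0)) = exp (- a / y0)"
      unfolding r_def by (simp add: exp_of_nat_mult[symmetric] exp_add[symmetric] algebra_simps)
    ultimately have "r ^ 4 * 72 \<le> exp (- a / y0)" using r by (metis mult_left_mono zero_le_power less_imp_le)
    then have "106/5 * r ^ 4 \<le> exp (- a / y0) * (8/27)" using zero_le_power[of r 4] r by linarith
    then have "(106/5 * r ^ 4) * a \<le> (exp (- a / y0) * (8/27)) * a"
      using a_pos by (intro mult_right_mono) auto
    then show ?thesis by (simp add: algebra_simps)
  qed
  finally show ?thesis .
qed

lemma theta_sum_antimono_near:
  fixes a y0 y :: real
  assumes a: "a \<ge> pi" and y: "433/500 \<le> y0" "y0 \<le> 9/8" "y0 \<le> y" "y \<le> 3/2"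
    and cos_ge: "cos (pi / (4 * y0\<^sup>2)) \<ge> 1/2"
  shows "theta_sum (a / y) (pi / (4 * y\<^sup>2)) \<le> theta_sum (a / y0) (pi / (4 * y0\<^sup>2))"
proof -
  define e where "e = exp (- a / y)"
  define e0 where "e0 = exp (- a / y0)"
  define P where "P = (y - y0) * (e0 * a * (8/27))"
  have a_pos: "a > 0" using a pi_gt_zero by linarith
  have y0_pos: "y0 > 0" using y by linarith
  define X where "X = 4 * exp (- (2 * a / 3)) ^ 4 / (1 - 4 * exp (- (2 * a / 3)))"
  have "4 * exp (- (2 * a / 3)) < 1" using exp_neg_two_thirds_le[OF a] by simp
  then have "(\<Sum>n. theta_term (a / y) (pi / (4 * y\<^sup>2)) (n + 2))
      - (\<Sum>n. theta_term (a / y0) (pi / (4 * y0\<^sup>2)) (n + 2))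
      \<le> (y - y0) * ((a / y0\<^sup>2 + pi / (2 * y0 ^ 3)) * X)"
    unfolding X_def mult.assoc[symmetric] by (rule theta_tail_diff_le[OF a_pos _ y0_pos y(3,4)])
  also have "\<dots> \<le> (y - y0) * (e0 * a * (8/27))"
    unfolding X_def e0_def using theta_tail_coeff_le[OF a y(1,2)] y by (intro mult_left_mono) auto
  finally have tail: "(\<Sum>n. theta_term (a / y) (pi / (4 * y\<^sup>2)) (n + 2))
      - (\<Sum>n. theta_term (a / y0) (pi / (4 * y0\<^sup>2)) (n + 2)) \<le> P" unfolding P_def .
  have "y * y0 \<le> 27/16" using mult_mono[of y "3/2" y0 "9/8"] y y0_pos by simp
  then have "a * (y - y0) / (27/16) \<le> a * (y - y0) / (y * y0)"
    using y y0_pos a_pos by (intro divide_left_mono) auto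
  then have "e0 * (a * (y - y0) / (27/16)) \<le> e0 * (a * (y - y0) / (y * y0))"
    by (rule mult_left_mono) (simp add: e0_def)
  also have "\<dots> \<le> e - e0"
    unfolding e_def e0_def using a_pos y0_pos y by (intro exp_neg_div_increase_ge) auto
  finally have gain: "2 * P \<le> e - e0" unfolding P_def by (simp add: algebra_simps)
  have first: "theta_term (a / y) (pi / (4 * y\<^sup>2)) 1 - theta_term (a / y0) (pi / (4 * y0\<^sup>2)) 1
      \<le> - (e - e0) / 2"
    unfolding e_def e0_def using a_pos y cos_ge by (intro theta_term_1_diff_le) auto
  have "a / y > 0" "a / y0 > 0" using a_pos y0_pos y by auto
  then have "theta_sum (a / y) (pi / (4 * y\<^sup>2)) - theta_sum (a / y0) (pi / (4 * y0\<^sup>2))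
      = (theta_term (a / y) (pi / (4 * y\<^sup>2)) 1 - theta_term (a / y0) (pi / (4 * y0\<^sup>2)) 1)
        + ((\<Sum>n. theta_term (a / y) (pi / (4 * y\<^sup>2)) (n + 2))
           - (\<Sum>n. theta_term (a / y0) (pi / (4 * y0\<^sup>2)) (n + 2)))"
    using theta_sum_split by simp
  with tail gain first show ?thesis by argo
qed

section \<open>Large c: dominance of the first term\<close>

lemma exp_neg_le_inverse: "(c::real) \<ge> 0 \<Longrightarrow> exp (- c) \<le> 1 / (1 + c)"
  using exp_ge_add_one_self[of c] by (simp add: exp_minus field_simps)

lemma exp_neg_mult_ge_power:
  fixes x :: real
  assumes "0 \<le> x" "x \<le> 1"
  shows "(1 - x) ^ n \<le> exp (- (real n * x))"
  using power_mono[OF exp_ge_add_one_self[of "-x"], of n] assms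
  by (simp add: exp_of_nat_mult[symmetric])

lemma theta_tail_bound_eq: "theta_tail_bound c = exp (-c) * (exp (-c) ^ 3 / (1 - exp (-c) ^ 5))"
  unfolding theta_tail_bound_def by (simp add: power_Suc[symmetric] mult.commute del: power_Suc)

lemma theta_tail_bound_le:
  assumes "exp (-c) \<le> 1/2"
  shows "theta_tail_bound c \<le> 2 * exp (-c) ^ 4"
proof -
  define x where "x = exp (-c)"
  have "x ^ 5 \<le> (1/2) ^ 5" using assms unfolding x_def by (intro power_mono) auto
  then have "1 - x ^ 5 \<ge> 1/2" by (simp add: numeral_eq_Suc)
  then have "x ^ 4 / (1 - x ^ 5) \<le> x ^ 4 / (1/2)" by (intro divide_left_mono) (auto simp: x_def)
  then show ?thesis unfolding theta_tail_bound_def x_def[symmetric] by simp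
qed

lemma first_term_minus_tail_ge:
  assumes "exp (-c) \<le> X" "X < 1" "cos t \<ge> 939/1000"
  shows "exp (-c) * cos t - theta_tail_bound c \<ge> exp (-c) * (939/1000 - X ^ 3 / (1 - X ^ 5))"
proof -
  define x where "x = exp (-c)"
  have x: "0 < x" "x \<le> X" using assms by (auto simp: x_def)
  have "x ^ 5 \<le> X ^ 5" using x by (intro power_mono) auto
  moreover have "X ^ 5 < 1" using x assms by (simp add: power_less_one_iff)
  ultimately have "x ^ 3 / (1 - x ^ 5) \<le> X ^ 3 / (1 - X ^ 5)" using x by (intro frac_le power_mono) auto
  then have "theta_tail_bound c \<le> x * (X ^ 3 / (1 - X ^ 5))"
    unfolding theta_tail_bound_eq x_def[symmetric] using x by (intro mult_left_mono) auto
  moreover have "x * (939/1000) \<le> x * cos t" using assms x by (intro mult_left_mono) auto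
  ultimately show ?thesis unfolding x_def[symmetric] by (simp add: algebra_simps)
qed

lemma first_term_dominates:
  fixes c t q :: real
  assumes c: "c \<ge> 1/4" and cos_ge: "cos t \<ge> 939/1000"
    and q: "0 \<le> q" "q \<le> 1/14" "q \<le> exp (- (4 * c / 3))"
  shows "exp (-c) * cos t - theta_tail_bound c \<ge> 10008/10000 * q"
proof -
  define x where "x = exp (-c)"
  have x_le: "x \<le> 1 / (1 + c)" unfolding x_def using exp_neg_le_inverse c by simp
  consider "c \<le> 3/5" | "3/5 \<le> c" "c \<le> 6/5" | "6/5 \<le> c" by linarith
  then show ?thesis
  proof cases
    case 1
    have "1 / (1 + c) \<le> 4/5" using c by (simp add: field_simps)
    then have "x \<le> 4/5" using x_le by linarith
    then have "exp (-c) * cos t - theta_tail_bound c \<ge> x * (939/1000 - (4/5) ^ 3 / (1 - (4/5) ^ 5))"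
      unfolding x_def using cos_ge by (intro first_term_minus_tail_ge) auto
    moreover have "(37/40) ^ 8 \<le> x"
    proof -
      have "exp (- (3/5)) \<le> x" unfolding x_def using 1 by simp
      then show ?thesis using exp_neg_mult_ge_power[of "3/40" 8] by simp
    qed
    ultimately show ?thesis using q by (simp add: numeral_eq_Suc)
  next
    case 2
    have "1 / (1 + c) \<le> 5/8" using 2 by (simp add: field_simps)
    then have "x \<le> 5/8" using x_le by linarith
    then have "exp (-c) * cos t - theta_tail_bound c \<ge> x * (939/1000 - (5/8) ^ 3 / (1 - (5/8) ^ 5))"
      unfolding x_def using cos_ge by (intro first_term_minus_tail_ge) auto
    moreover have "(37/40) ^ 16 \<le> x"
    proof -
      have "exp (- (6/5)) \<le> x" unfolding x_def using 2 by simp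
      then show ?thesis using exp_neg_mult_ge_power[of "3/40" 16] by simp
    qed
    ultimately show ?thesis using q by (simp add: numeral_eq_Suc)
  next
    case 3
    have "1 / (1 + c) \<le> 5/11" using 3 by (simp add: field_simps)
    then have "x \<le> 5/11" using x_le by linarith
    then have "exp (-c) * cos t - theta_tail_bound c \<ge> x * (939/1000 - (5/11) ^ 3 / (1 - (5/11) ^ 5))"
      unfolding x_def using cos_ge by (intro first_term_minus_tail_ge) auto
    moreover have "q \<le> x * (5/7)"
    proof -
      have "1 / (1 + c/3) \<le> 5/7" using 3 by (simp add: field_simps)
      then have "exp (- (c/3)) \<le> 5/7" using exp_neg_le_inverse[of "c/3"] 3 by simp
      moreover have "exp (- (4 * c / 3)) = x * exp (- (c/3))" unfolding x_def by (simp add: exp_add[symmetric])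
      ultimately show ?thesis using q by (smt (verit) exp_gt_zero mult_left_mono x_def)
    qed
    ultimately show ?thesis using q by (simp add: numeral_eq_Suc)
  qed
qed

section \<open>The maximum at the threshold\<close>

lemma theta_tail_bound_le_small:
  assumes "exp (-c) \<le> 1/14"
  shows "theta_tail_bound c \<le> exp (-c) / 1372"
proof -
  define q where "q = exp (-c)"
  have q: "0 < q" "q \<le> 1/14" using assms by (auto simp: q_def)
  have "q ^ 3 \<le> (1/14) ^ 3" using q by (intro power_mono) auto
  then have "q * q ^ 3 \<le> q * (1/14) ^ 3" using q by (intro mult_left_mono) auto
  then have "q ^ 4 \<le> q / 2744" by (simp add: power_Suc[symmetric] del: power_Suc) (simp add: numeral_eq_Suc)
  then show ?thesis using theta_tail_bound_le[of c] q unfolding q_def by simp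
qed

lemma cos_quarter_pi_div_sq_ge:
  assumes "sqrt 3 / 2 \<le> y"
  shows "cos (pi / (4 * y\<^sup>2)) \<ge> 1/2"
proof -
  have "(sqrt 3 / 2)\<^sup>2 \<le> y\<^sup>2" using assms by (intro power_mono) auto
  then have "3 \<le> 4 * y\<^sup>2" by (simp add: power_divide)
  then have "pi / (4 * y\<^sup>2) \<le> pi / 3" by (intro divide_left_mono) auto
  moreover have "pi / (4 * y\<^sup>2) \<le> pi" using calculation pi_gt_zero by linarith
  ultimately have "cos (pi / 3) \<le> cos (pi / (4 * y\<^sup>2))"
    by (intro cos_mono_le_eq[THEN iffD2]) auto
  then show ?thesis by (simp add: cos_60)
qed

lemma exp_neg_pi_div_le:
  assumes "1 \<le> \<alpha>" "0 < y" "y \<le> 9/8"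
  shows "exp (- (pi * \<alpha> / y)) \<le> 1/14"
proof -
  have "pi / (9/8) \<le> pi * \<alpha> / y" using assms by (intro frac_le) auto
  then have "279/100 \<le> pi * \<alpha> / y" using pi_bounds by simp
  then have "14 \<le> exp (pi * \<alpha> / y)" using exp_279_ge by (smt (verit) exp_le_cancel_iff)
  then show ?thesis by (simp add: exp_minus field_simps)
qed

lemma G_ge_first_term:
  assumes "1 \<le> \<alpha>" "0 < y" "y \<le> 9/8"
  shows "G \<alpha> y \<ge> 1 - 2 * (10008/10000) * exp (- (pi * \<alpha> / y))"
proof -
  define c where "c = pi * \<alpha> / y"
  have "c > 0" using assms by (simp add: c_def)
  have small: "exp (-c) \<le> 1/14" unfolding c_def using exp_neg_pi_div_le[OF assms] by simp
  have "G \<alpha> y = 1 + 2 * theta_sum c (pi / (4 * y\<^sup>2))"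
    using G_eq_theta_sum assms by (simp add: c_def)
  moreover have "theta_sum c (pi / (4 * y\<^sup>2)) \<ge> - exp (-c) * cos (pi / (4 * y\<^sup>2)) - theta_tail_bound c"
    by (rule theta_sum_ge[OF \<open>c > 0\<close>])
  moreover have "exp (-c) * cos (pi / (4 * y\<^sup>2)) \<le> exp (-c)" by (simp add: mult_left_le)
  ultimately have "G \<alpha> y \<ge> 1 - 2 * (10008/10000) * exp (-c)"
    using theta_tail_bound_le_small[OF small] exp_ge_zero[of "-c"] by linarith
  then show ?thesis by (simp add: c_def)
qed

lemma G_le_near:
  assumes "1 \<le> \<alpha>" "sqrt 3 / 2 \<le> y0" "y0 \<le> 9/8" "y0 \<le> y" "y \<le> 3/2"
  shows "G \<alpha> y \<le> G \<alpha> y0"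
proof -
  have "433/500 \<le> y0" using assms sqrt3_bounds by linarith
  then have "theta_sum (pi * \<alpha> / y) (pi / (4 * y\<^sup>2)) \<le> theta_sum (pi * \<alpha> / y0) (pi / (4 * y0\<^sup>2))"
    using assms cos_quarter_pi_div_sq_ge[of y0] by (intro theta_sum_antimono_near) auto
  moreover have "0 < y0" using \<open>433/500 \<le> y0\<close> by linarith
  ultimately show ?thesis using assms by (simp add: G_eq_theta_sum)
qed

lemma G_le_far_small_c:
  assumes "1 \<le> \<alpha>" "0 < y" "pi * \<alpha> / y \<le> 1/4"
  shows "G \<alpha> y \<le> 17/20"
proof -
  define c where "c = pi * \<alpha> / y"
  have "pi \<le> pi * \<alpha>" using assms by simp
  moreover have "3 \<le> pi * \<alpha>" using \<open>pi \<le> pi * \<alpha>\<close> pi_bounds by linarith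
  ultimately have "pi * 3 \<le> (pi * \<alpha>) * (pi * \<alpha>)" by (intro mult_mono) auto
  then have "pi * 3 / (12 * y\<^sup>2) \<le> (pi * \<alpha>) * (pi * \<alpha>) / (12 * y\<^sup>2)"
    by (intro divide_right_mono) auto
  then have "\<bar>pi / (4 * y\<^sup>2)\<bar> \<le> c\<^sup>2 / 12" unfolding c_def by (simp add: power2_eq_square field_simps)
  moreover have "0 < c" "c \<le> 1/4" using assms by (simp_all add: c_def)
  ultimately have "1 + 2 * theta_sum c (pi / (4 * y\<^sup>2)) \<le> 17/20" by (intro theta_sum_small_c_le)
  then show ?thesis using assms by (simp add: G_eq_theta_sum c_def)
qed

lemma G_le_far_large_c:
  assumes "1 \<le> \<alpha>" "0 < y0" "y0 \<le> 9/8" "3/2 \<le> y" "1/4 \<le> pi * \<alpha> / y"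
  shows "G \<alpha> y \<le> 1 - 2 * (10008/10000) * exp (- (pi * \<alpha> / y0))"
proof -
  define c where "c = pi * \<alpha> / y"
  define t where "t = pi / (4 * y\<^sup>2)"
  have "c > 0" using assms by (simp add: c_def)
  have "cos t \<ge> 939/1000"
  proof -
    have "(3/2)\<^sup>2 \<le> y\<^sup>2" using assms by (intro power_mono) auto
    then have "t \<le> pi / 9" unfolding t_def by (intro divide_left_mono) (auto simp: power2_eq_square)
    then have "t\<^sup>2 \<le> (3142/9000)\<^sup>2" using pi_bounds by (intro power_mono) (auto simp: t_def)
    then show ?thesis using one_minus_cos_le[of t] by (simp add: power2_eq_square)
  qed
  moreover have "4 * c / 3 \<le> pi * \<alpha> / y0"
    unfolding c_def using assms by (simp add: field_simps mult_left_mono)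
  ultimately have "exp (-c) * cos t - theta_tail_bound c \<ge> 10008/10000 * exp (- (pi * \<alpha> / y0))"
    using assms exp_neg_pi_div_le[of \<alpha> y0] by (intro first_term_dominates) (auto simp: c_def)
  moreover have "G \<alpha> y = 1 + 2 * theta_sum c t"
    using G_eq_theta_sum assms by (simp add: c_def t_def)
  ultimately show ?thesis using theta_sum_le[OF \<open>c > 0\<close>, of t] by linarith
qed

lemma G_le_G_of_le:
  assumes "1 \<le> \<alpha>" "sqrt 3 / 2 \<le> y0" "y0 \<le> 9/8" "y0 \<le> y"
  shows "G \<alpha> y \<le> G \<alpha> y0"
proof -
  have "0 < y0" using assms sqrt3_bounds by linarith
  have G_y0: "1 - 2 * (10008/10000) * exp (- (pi * \<alpha> / y0)) \<le> G \<alpha> y0"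
    by (rule G_ge_first_term[OF assms(1) \<open>0 < y0\<close> assms(3)])
  consider "y \<le> 3/2" | "3/2 \<le> y" "pi * \<alpha> / y \<le> 1/4" | "3/2 \<le> y" "1/4 \<le> pi * \<alpha> / y"
    by linarith
  then show ?thesis
  proof cases
    case 1
    then show ?thesis using G_le_near assms by blast
  next
    case 2
    have "exp (- (pi * \<alpha> / y0)) \<le> 1/14" using exp_neg_pi_div_le assms \<open>0 < y0\<close> by blast
    then show ?thesis using G_le_far_small_c[OF assms(1) _ 2(2)] G_y0 2(1) by fastforce
  next
    case 3
    then show ?thesis using G_le_far_large_c[OF assms(1) \<open>0 < y0\<close> assms(3)] G_y0 by fastforce
  qed
qed

section \<open>The gap to the value at sqrt 3 / 2\<close>

lemma shifted_point_bounds: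
  assumes "1 \<le> \<alpha>"
  shows "sqrt 3 / 2 < sqrt 3 / 2 + 1 / (4 * sqrt \<alpha>)" "sqrt 3 / 2 + 1 / (4 * sqrt \<alpha>) \<le> 9/8"
proof -
  have "0 < 1 / (4 * sqrt \<alpha>)" "1 / (4 * sqrt \<alpha>) \<le> 1/4" using assms by (simp_all add: field_simps)
  then show "sqrt 3 / 2 < sqrt 3 / 2 + 1 / (4 * sqrt \<alpha>)" "sqrt 3 / 2 + 1 / (4 * sqrt \<alpha>) \<le> 9/8"
    using sqrt3_bounds by linarith+
qed

lemma exp_neg_shifted_ge:
  assumes "1 \<le> \<alpha>"
  shows "exp (- (pi * \<alpha> / (sqrt 3 / 2))) * (1 + 4/5 * sqrt \<alpha>)
         \<le> exp (- (pi * \<alpha> / (sqrt 3 / 2 + 1 / (4 * sqrt \<alpha>))))"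
proof -
  define s where "s = sqrt \<alpha>"
  define y1 where "y1 = sqrt 3 / 2"
  define y0 where "y0 = y1 + 1 / (4 * s)"
  have s: "1 \<le> s" "s\<^sup>2 = \<alpha>" using assms by (simp_all add: s_def)
  have y1: "433/500 \<le> y1" "y1 \<le> 17321/20000" using sqrt3_bounds by (simp_all add: y1_def)
  have y0: "0 < y0" "y0 \<le> 9/8"
    using shifted_point_bounds[OF assms] y1 sqrt3_bounds unfolding y0_def y1_def s_def by linarith+
  have "pi * \<alpha> / y1 - pi * \<alpha> / y0 = pi * \<alpha> * (y0 - y1) / (y0 * y1)"
    using y0 y1 by (simp add: field_simps)
  also have "\<dots> = pi * s / (4 * y0 * y1)"
  proof -
    have "y0 - y1 = 1 / (4 * s)" by (simp add: y0_def)
    then have "pi * \<alpha> * (y0 - y1) = pi * s\<^sup>2 * (1 / (4 * s))" by (simp add: s(2))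
    also have "\<dots> = pi * s / 4" using s(1) by (simp add: power2_eq_square)
    finally have "pi * \<alpha> * (y0 - y1) = pi * s / 4" .
    then show ?thesis by (simp only:)
  qed
  also have "\<dots> \<ge> 4/5 * s"
  proof -
    have "y0 * y1 \<le> 9/8 * (17321/20000)" using y0 y1 by (intro mult_mono) auto
    then have "pi * s / (39/10) \<le> pi * s / (4 * y0 * y1)"
      using s y0 y1 pi_gt_zero by (intro divide_left_mono) auto
    moreover have "4/5 * s \<le> pi * s / (39/10)" using pi_bounds s by (simp add: field_simps mult_right_mono)
    ultimately show ?thesis by linarith
  qed
  finally have "1 + 4/5 * s \<le> exp (pi * \<alpha> / y1 - pi * \<alpha> / y0)"
    using exp_ge_add_one_self[of "pi * \<alpha> / y1 - pi * \<alpha> / y0"] by linarith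
  then have "exp (- (pi * \<alpha> / y1)) * (1 + 4/5 * s)
      \<le> exp (- (pi * \<alpha> / y1)) * exp (pi * \<alpha> / y1 - pi * \<alpha> / y0)"
    by (rule mult_left_mono) simp
  then show ?thesis by (simp add: exp_add[symmetric] y0_def y1_def s_def)
qed

lemma exp_neg_shifted_pow4_le:
  assumes "1 \<le> \<alpha>"
  shows "exp (- (pi * \<alpha> / (sqrt 3 / 2 + 1 / (4 * sqrt \<alpha>)))) ^ 4 \<le> exp (- (pi * \<alpha> / (sqrt 3 / 2))) / 138"
proof -
  define y1 where "y1 = sqrt 3 / 2"
  define y0 where "y0 = y1 + 1 / (4 * sqrt \<alpha>)"
  have y1: "0 < y1" "y1 \<le> 17321/20000" using sqrt3_bounds by (simp_all add: y1_def)
  have y0: "0 < y0" "y0 \<le> 9/8"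
    using shifted_point_bounds[OF assms] sqrt3_bounds unfolding y0_def y1_def by linarith+
  have "4 / (9/8) \<le> 4 / y0" using y0 by (intro divide_left_mono) auto
  moreover have "1 / y1 \<le> 1 / (433/500)" using y1 sqrt3_bounds by (intro divide_left_mono) (auto simp: y1_def)
  ultimately have "2400/1000 \<le> 4 / y0 - 1 / y1" by simp
  then have "pi * (2400/1000) \<le> pi * \<alpha> * (4 / y0 - 1 / y1)"
    using assms by (intro mult_mono) auto
  then have "75/10 \<le> 4 * (pi * \<alpha> / y0) - pi * \<alpha> / y1"
    using pi_bounds by (simp add: field_simps)
  then have "138 \<le> exp (4 * (pi * \<alpha> / y0) - pi * \<alpha> / y1)"
    using exp_75_ge by (smt (verit) exp_le_cancel_iff)
  moreover have "exp (- (pi * \<alpha> / y0)) ^ 4 * exp (4 * (pi * \<alpha> / y0) - pi * \<alpha> / y1)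
      = exp (- (pi * \<alpha> / y1))"
    by (simp add: exp_of_nat_mult[symmetric] exp_add[symmetric])
  ultimately have "exp (- (pi * \<alpha> / y0)) ^ 4 * 138 \<le> exp (- (pi * \<alpha> / y1))"
    by (metis mult_left_mono exp_ge_zero zero_le_power)
  then show ?thesis by (simp add: y0_def y1_def)
qed

lemma G_le_first_term_plus_tail:
  assumes "0 < \<alpha>" "sqrt 3 / 2 \<le> y"
  shows "G \<alpha> y \<le> 1 - exp (- (pi * \<alpha> / y)) + 2 * theta_tail_bound (pi * \<alpha> / y)"
proof -
  have "0 < y" using assms sqrt3_bounds by linarith
  have "exp (- (pi * \<alpha> / y)) * (1/2) \<le> exp (- (pi * \<alpha> / y)) * cos (pi / (4 * y\<^sup>2))"
    using cos_quarter_pi_div_sq_ge[OF assms(2)] by (intro mult_left_mono) auto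
  moreover have "G \<alpha> y = 1 + 2 * theta_sum (pi * \<alpha> / y) (pi / (4 * y\<^sup>2))"
    using G_eq_theta_sum assms \<open>0 < y\<close> by simp
  moreover have "theta_sum (pi * \<alpha> / y) (pi / (4 * y\<^sup>2))
      \<le> - exp (- (pi * \<alpha> / y)) * cos (pi / (4 * y\<^sup>2)) + theta_tail_bound (pi * \<alpha> / y)"
    using assms \<open>0 < y\<close> by (intro theta_sum_le) simp
  ultimately show ?thesis by linarith
qed

lemma G_sqrt3_half_ge:
  assumes "0 < \<alpha>"
  shows "G \<alpha> (sqrt 3 / 2) \<ge> 1 - exp (- (pi * \<alpha> / (sqrt 3 / 2))) - 2 * theta_tail_bound (pi * \<alpha> / (sqrt 3 / 2))"
proof -
  have angle: "pi / (4 * (sqrt 3 / 2)\<^sup>2) = pi / 3" by (simp add: power_divide)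
  have "G \<alpha> (sqrt 3 / 2) = 1 + 2 * theta_sum (pi * \<alpha> / (sqrt 3 / 2)) (pi / 3)"
    unfolding angle[symmetric] using G_eq_theta_sum assms by simp
  moreover have "theta_sum (pi * \<alpha> / (sqrt 3 / 2)) (pi / 3)
      \<ge> - exp (- (pi * \<alpha> / (sqrt 3 / 2))) * (1/2) - theta_tail_bound (pi * \<alpha> / (sqrt 3 / 2))"
    using theta_sum_ge[of "pi * \<alpha> / (sqrt 3 / 2)" "pi / 3"] assms by (simp add: cos_60)
  ultimately show ?thesis by linarith
qed

lemma G_shifted_le:
  assumes "1 \<le> \<alpha>"
  shows "G \<alpha> (sqrt 3 / 2 + 1 / (4 * sqrt \<alpha>))
         \<le> G \<alpha> (sqrt 3 / 2) - 2 * sqrt \<alpha> / 3 * exp (- 2 * pi * \<alpha> / sqrt 3)"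
proof -
  define y1 where "y1 = sqrt 3 / 2"
  define y0 where "y0 = y1 + 1 / (4 * sqrt \<alpha>)"
  define q0 where "q0 = exp (- (pi * \<alpha> / y0))"
  define q1 where "q1 = exp (- (pi * \<alpha> / y1))"
  have y1: "0 < y1" "y1 \<le> 9/8" using sqrt3_bounds by (simp_all add: y1_def)
  have y0: "y1 < y0" "y0 \<le> 9/8" using shifted_point_bounds[OF assms] by (simp_all add: y0_def y1_def)
  have "G \<alpha> y0 \<le> 1 - q0 + 2 * theta_tail_bound (pi * \<alpha> / y0)"
    using G_le_first_term_plus_tail[of \<alpha> y0] assms y0 by (simp add: q0_def y1_def)
  moreover have "G \<alpha> y1 \<ge> 1 - q1 - 2 * theta_tail_bound (pi * \<alpha> / y1)"
    using G_sqrt3_half_ge[of \<alpha>] assms by (simp add: q1_def y1_def)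
  moreover have "theta_tail_bound (pi * \<alpha> / y1) \<le> q1 / 1372"
    using theta_tail_bound_le_small exp_neg_pi_div_le[OF assms] y1 by (simp add: q1_def)
  moreover have "theta_tail_bound (pi * \<alpha> / y0) \<le> q1 / 69"
  proof -
    have "q0 \<le> 1/14" using exp_neg_pi_div_le[OF assms, of y0] y0 y1 by (simp add: q0_def)
    then have "theta_tail_bound (pi * \<alpha> / y0) \<le> 2 * q0 ^ 4"
      using theta_tail_bound_le[of "pi * \<alpha> / y0"] by (simp add: q0_def)
    moreover have "q0 ^ 4 \<le> q1 / 138"
      using exp_neg_shifted_pow4_le[OF assms] by (simp add: q0_def q1_def y0_def y1_def)
    ultimately show ?thesis by linarith
  qed
  moreover have "q1 \<le> sqrt \<alpha> * q1"
    using mult_right_mono[of 1 "sqrt \<alpha>" q1] assms by (simp add: q1_def)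
  moreover have "q1 + 4/5 * (sqrt \<alpha> * q1) \<le> q0"
    using exp_neg_shifted_ge[OF assms] by (simp add: q0_def q1_def y0_def y1_def algebra_simps)
  moreover have "q1 > 0" by (simp add: q1_def)
  ultimately have "G \<alpha> y0 \<le> G \<alpha> y1 - 2/3 * (sqrt \<alpha> * q1)" by linarith
  moreover have "q1 = exp (- 2 * pi * \<alpha> / sqrt 3)" by (simp add: q1_def y1_def field_simps)
  ultimately show ?thesis by (simp add: y0_def y1_def)
qed

theorem mainTheorem15:
  fixes \<alpha> :: real
  assumes "\<alpha> \<ge> 1"
  shows "(\<forall>y \<ge> sqrt 3 / 2 + 1 / (4 * sqrt \<alpha>). G \<alpha> y \<le> G \<alpha> (sqrt 3 / 2 + 1 / (4 * sqrt \<alpha>)))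
       \<and> G \<alpha> (sqrt 3 / 2 + 1 / (4 * sqrt \<alpha>))
           \<le> G \<alpha> (sqrt 3 / 2) - 2 * sqrt \<alpha> / 3 * exp (- 2 * pi * \<alpha> / sqrt 3)"
  using G_le_G_of_le[OF assms] shifted_point_bounds[OF assms] G_shifted_le[OF assms] by auto

end
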